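(* Let $k\in\mathbb{N}$ and let $F\colon S_{\ell_\infty^k}\to S^+_{\ell_1^k}$ be any map. Then the map $G\colon S_{\ell_\infty^k}\to S^+_{\ell_1^k}$ given by \[G=\frac1{k!}\sum_{\pi\in\mathrm{Per}_k}P_{\pi^{-1}}\circ F\circ P_\pi\] is well defined, equivariant with respect to basis permutations, and satisfies $\omega_G\le\omega_F$. Furthermore, if $F$ is support preserving, then so is $G$.
   Context: $S_{\ell_\infty^k}$ is the unit sphere of $(\mathbb{R}^k,\|\cdot\|_\infty)$; $S^+_{\ell_1^k}=\{x\in\mathbb{R}^k:\|x\|_1=1, x_i\ge0\ \forall i\}$. $\mathrm{Per}_k$ is the group of permutations of $\{1,\dots,k\}$; $P_\pi(x_j)_{j=1}^k=(x_{\pi(j)})_{j=1}^k$. Equivariant with respect to basis permutations: $G(P_\pi x)=P_\pi G(x)$ for all $x,\pi$. $\omega_F(t)=\sup\{\|F(x)-F(y)\|_1:\|x-y\|_\infty\le t\}$. Support preserving: $\mathrm{supp}(F(x))=\mathrm{supp}(x)$ for all $x$, where $\mathrm{supp}(x)=\{i:x_i\neq0\}$. *)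

theory Defs
  imports "HOL-Analysis.Analysis" "HOL-Combinatorics.Permutations"
begin

text \<open>Vectors in R^k are modelled as real^'k with a finite index type 'k, k = CARD('k).\<close>

definition linf_norm :: "real^'k \<Rightarrow> real" where
  "linf_norm x = Max (range (\<lambda>i. \<bar>x $ i\<bar>))"

definition l1_norm :: "real^'k \<Rightarrow> real" where
  "l1_norm x = (\<Sum>i\<in>UNIV. \<bar>x $ i\<bar>)"

definition sphere_linf :: "(real^'k) set" where
  "sphere_linf = {x. linf_norm x = 1}"

definition pos_sphere_l1 :: "(real^'k) set" where
  "pos_sphere_l1 = {x. l1_norm x = 1 \<and> (\<forall>i. x $ i \<ge> 0)}"

definition Pperm :: "('k \<Rightarrow> 'k) \<Rightarrow> real^'k \<Rightarrow> real^'k" where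
  "Pperm \<pi> x = (\<chi> j. x $ \<pi> j)"

definition symmetrize :: "(real^'k \<Rightarrow> real^'k) \<Rightarrow> real^'k \<Rightarrow> real^'k" where
  "symmetrize F x = (1 / fact CARD('k)) *\<^sub>R
     (\<Sum>\<pi>\<in>{\<pi>. \<pi> permutes (UNIV::'k set)}. Pperm (inv \<pi>) (F (Pperm \<pi> x)))"

definition modulus :: "(real^'k \<Rightarrow> real^'k) \<Rightarrow> real \<Rightarrow> ereal" where
  "modulus F t = Sup {ereal (l1_norm (F x - F y)) | x y.
      x \<in> sphere_linf \<and> y \<in> sphere_linf \<and> linf_norm (x - y) \<le> t}"

definition supp :: "real^'k \<Rightarrow> 'k set" where
  "supp x = {i. x $ i \<noteq> 0}"

end

theory Submission
  imports Defs
begin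

text \<open>Coordinate permutations preserve
  both norms and transport supports, so every summand lies in \<open>S\<^sup>+\<close> and, if \<open>F\<close> preserves
  supports, has support \<open>supp x\<close>; the summands for \<open>x\<close> and \<open>y\<close> differ in \<open>\<ell>\<^sub>1\<close>-norm by
  \<open>\<parallel>F (P\<^sub>\<pi> x) - F (P\<^sub>\<pi> y)\<parallel>\<^sub>1\<close>, a value of \<open>F\<close>'s modulus at the same distance. An average of
  nonnegative unit vectors of \<open>\<ell>\<^sub>1\<close> is again one, its support is the union of the supports,
  and its \<open>\<ell>\<^sub>1\<close>-norm is at most that of the largest summand. Equivariance is the
  reindexing \<open>\<pi> \<mapsto> \<sigma>\<^sup>-\<^sup>1 \<circ> \<pi>\<close> of the sum.\<close>

lemma Pperm_Pperm: "Pperm p (Pperm q x) = Pperm (q \<circ> p) x"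
  by (simp add: Pperm_def vec_eq_iff)

lemma Pperm_inv_Pperm: "p permutes UNIV \<Longrightarrow> Pperm (inv p) (Pperm p x) = x"
  by (simp add: Pperm_def vec_eq_iff permutes_inverses)

lemma Pperm_sum: "Pperm p (sum f S) = (\<Sum>a\<in>S. Pperm p (f a))"
  by (simp add: Pperm_def vec_eq_iff)

lemma Pperm_scaleR: "Pperm p (c *\<^sub>R x) = c *\<^sub>R Pperm p x"
  by (simp add: Pperm_def vec_eq_iff)

lemma Pperm_diff: "Pperm p (x - y) = Pperm p x - Pperm p y"
  by (simp add: Pperm_def vec_eq_iff)

lemma supp_Pperm: "supp (Pperm p x) = p -` supp x"
  by (simp add: supp_def Pperm_def)

lemma linf_norm_Pperm:
  assumes "p permutes UNIV"
  shows "linf_norm (Pperm p x) = linf_norm x"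
proof -
  have "range (\<lambda>i. \<bar>Pperm p x $ i\<bar>) = (\<lambda>i. \<bar>x $ i\<bar>) ` range p"
    by (auto simp: Pperm_def)
  also have "range p = UNIV"
    using permutes_surj[OF assms] by simp
  finally show ?thesis
    by (simp add: linf_norm_def)
qed

lemma l1_norm_Pperm:
  assumes "p permutes UNIV"
  shows "l1_norm (Pperm p x) = l1_norm x"
  using sum.permute[OF assms, of "\<lambda>i. \<bar>x $ i\<bar>"]
  by (simp add: l1_norm_def Pperm_def o_def)

lemma Pperm_sphere_linf: "p permutes UNIV \<Longrightarrow> x \<in> sphere_linf \<Longrightarrow> Pperm p x \<in> sphere_linf"
  by (simp add: sphere_linf_def linf_norm_Pperm)

lemma Pperm_pos_sphere_l1:
  "p permutes UNIV \<Longrightarrow> x \<in> pos_sphere_l1 \<Longrightarrow> Pperm p x \<in> pos_sphere_l1"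
  by (simp add: pos_sphere_l1_def l1_norm_Pperm) (simp add: Pperm_def)

lemma l1_norm_scaleR: "l1_norm (c *\<^sub>R x) = \<bar>c\<bar> * l1_norm x"
  by (simp add: l1_norm_def abs_mult sum_distrib_left)

lemma l1_norm_triangle: "l1_norm (x + y) \<le> l1_norm x + l1_norm y"
  unfolding l1_norm_def sum.distrib[symmetric] by (simp add: sum_mono abs_triangle_ineq)

lemma l1_norm_sum_le: "l1_norm (sum f S) \<le> (\<Sum>a\<in>S. l1_norm (f a))"
proof (induction S rule: infinite_finite_induct)
  case (insert a S)
  then show ?case
    using l1_norm_triangle[of "f a" "sum f S"] by simp
qed (simp_all add: l1_norm_def)

lemma l1_norm_sum_nonneg:
  assumes "\<And>a i. a \<in> S \<Longrightarrow> 0 \<le> f a $ i"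
  shows "l1_norm (sum f S) = (\<Sum>a\<in>S. l1_norm (f a))"
proof -
  have "l1_norm (sum f S) = (\<Sum>i\<in>UNIV. \<Sum>a\<in>S. f a $ i)"
    unfolding l1_norm_def using assms by (auto intro!: sum.cong abs_of_nonneg sum_nonneg)
  also have "\<dots> = (\<Sum>a\<in>S. \<Sum>i\<in>UNIV. f a $ i)"
    by (rule sum.swap)
  also have "\<dots> = (\<Sum>a\<in>S. l1_norm (f a))"
    unfolding l1_norm_def using assms by (auto intro!: sum.cong)
  finally show ?thesis .
qed

lemma supp_scaleR: "c \<noteq> 0 \<Longrightarrow> supp (c *\<^sub>R x) = supp x"
  by (simp add: supp_def)

lemma supp_sum_nonneg:
  assumes "finite S" "\<And>a i. a \<in> S \<Longrightarrow> 0 \<le> f a $ i"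
  shows "supp (sum f S) = (\<Union>a\<in>S. supp (f a))"
  using assms by (auto simp: supp_def sum_nonneg_eq_0_iff)

lemma mean_in_pos_sphere_l1:
  assumes "finite S" "S \<noteq> {}" "\<And>a. a \<in> S \<Longrightarrow> f a \<in> pos_sphere_l1"
  shows "(1 / card S) *\<^sub>R sum f S \<in> pos_sphere_l1"
proof -
  have nonneg: "0 \<le> f a $ i" if "a \<in> S" for a i
    using assms(3)[OF that] by (simp add: pos_sphere_l1_def)
  have "l1_norm (sum f S) = card S"
    using l1_norm_sum_nonneg[of S f] nonneg assms(3) by (simp add: pos_sphere_l1_def)
  then show ?thesis
    using assms(1,2) nonneg
    by (simp add: pos_sphere_l1_def l1_norm_scaleR sum_nonneg)
qed

lemma l1_norm_mean_le_summand:
  assumes "finite S" "S \<noteq> {}"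
  obtains a where "a \<in> S" "l1_norm ((1 / card S) *\<^sub>R sum f S) \<le> l1_norm (f a)"
proof -
  let ?m = "Max ((\<lambda>a. l1_norm (f a)) ` S)"
  have "?m \<in> (\<lambda>a. l1_norm (f a)) ` S"
    using assms by (intro Max_in) simp_all
  then obtain a where a: "a \<in> S" "l1_norm (f a) = ?m"
    by auto
  have "(\<Sum>b\<in>S. l1_norm (f b)) \<le> card S * ?m"
    using assms(1) by (intro sum_bounded_above) simp
  then have "l1_norm (sum f S) \<le> card S * l1_norm (f a)"
    using l1_norm_sum_le[of f S] a(2) by (metis order_trans)
  moreover have "0 < real (card S)"
    using assms by (simp add: card_gt_0_iff)
  ultimately have "l1_norm ((1 / card S) *\<^sub>R sum f S) \<le> l1_norm (f a)"
    by (simp add: l1_norm_scaleR field_simps)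
  with a(1) show thesis
    by (rule that)
qed

lemma modulus_upper:
  "x \<in> sphere_linf \<Longrightarrow> y \<in> sphere_linf \<Longrightarrow> linf_norm (x - y) \<le> t \<Longrightarrow>
    ereal (l1_norm (F x - F y)) \<le> modulus F t"
  unfolding modulus_def by (rule Sup_upper) blast

lemma finite_permutations_UNIV: "finite {\<pi>. \<pi> permutes (UNIV :: 'k::finite set)}"
  by (simp add: finite_permutations)

lemma card_permutations_UNIV: "card {\<pi>. \<pi> permutes (UNIV :: 'k::finite set)} = fact CARD('k)"
  by (rule card_permutations) simp_all

lemma permutations_UNIV_nonempty: "{\<pi>. \<pi> permutes (UNIV :: 'k set)} \<noteq> {}"
  using permutes_id by blast

lemma symmetrize_eq_mean:
  fixes x :: "real^'k"
  shows "symmetrize F x = (1 / card {\<pi>. \<pi> permutes (UNIV :: 'k set)}) *\<^sub>R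
     (\<Sum>\<pi> | \<pi> permutes UNIV. Pperm (inv \<pi>) (F (Pperm \<pi> x)))"
  by (simp add: symmetrize_def card_permutations_UNIV)

lemma symmetrize_diff:
  fixes x y :: "real^'k"
  shows "symmetrize F x - symmetrize F y = (1 / card {\<pi>. \<pi> permutes (UNIV :: 'k set)}) *\<^sub>R
     (\<Sum>\<pi> | \<pi> permutes UNIV. Pperm (inv \<pi>) (F (Pperm \<pi> x) - F (Pperm \<pi> y)))"
  by (simp add: symmetrize_eq_mean scaleR_right_diff_distrib[symmetric] sum_subtractf Pperm_diff)

lemma symmetrize_Pperm:
  assumes \<sigma>: "\<sigma> permutes UNIV"
  shows "symmetrize F (Pperm \<sigma> x) = Pperm \<sigma> (symmetrize F x)"
proof -
  have inv_comp: "inv (inv \<sigma> \<circ> \<pi>) = inv \<pi> \<circ> \<sigma>" if "\<pi> permutes UNIV" for \<pi>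
    using that \<sigma> by (simp add: o_inv_distrib permutes_bij bij_imp_bij_inv inv_inv_eq)
  have "(\<Sum>\<pi> | \<pi> permutes UNIV. Pperm (inv \<pi>) (F (Pperm (\<sigma> \<circ> \<pi>) x)))
      = (\<Sum>\<pi> | \<pi> permutes UNIV. Pperm (inv (inv \<sigma> \<circ> \<pi>)) (F (Pperm (\<sigma> \<circ> (inv \<sigma> \<circ> \<pi>)) x)))"
    by (rule setum_permutations_compose_left[OF permutes_inv[OF \<sigma>]])
  also have "\<dots> = (\<Sum>\<pi> | \<pi> permutes UNIV. Pperm \<sigma> (Pperm (inv \<pi>) (F (Pperm \<pi> x))))"
    using \<sigma> by (intro sum.cong) (simp_all add: inv_comp Pperm_Pperm o_assoc permutes_inv_o)
  finally show ?thesis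
    by (simp add: symmetrize_def Pperm_Pperm Pperm_scaleR Pperm_sum)
qed

lemma symmetrize_in_pos_sphere_l1:
  assumes "\<And>x. x \<in> sphere_linf \<Longrightarrow> F x \<in> pos_sphere_l1" and "x \<in> sphere_linf"
  shows "symmetrize F x \<in> pos_sphere_l1"
  unfolding symmetrize_eq_mean
  using finite_permutations_UNIV permutations_UNIV_nonempty
  by (rule mean_in_pos_sphere_l1)
    (use assms in \<open>auto intro!: Pperm_pos_sphere_l1 Pperm_sphere_linf permutes_inv\<close>)

lemma supp_symmetrize:
  assumes maps: "\<And>x. x \<in> sphere_linf \<Longrightarrow> F x \<in> pos_sphere_l1"
    and supp_F: "\<And>x. x \<in> sphere_linf \<Longrightarrow> supp (F x) = supp x"
    and x: "x \<in> sphere_linf"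
  shows "supp (symmetrize F x) = supp x"
proof -
  have summand_nonneg: "0 \<le> Pperm (inv \<pi>) (F (Pperm \<pi> x)) $ i" if "\<pi> permutes UNIV" for \<pi> i
    using Pperm_pos_sphere_l1[OF permutes_inv[OF that] maps[OF Pperm_sphere_linf[OF that x]]]
    by (simp add: pos_sphere_l1_def)
  have supp_summand: "supp (Pperm (inv \<pi>) (F (Pperm \<pi> x))) = supp x" if "\<pi> permutes UNIV" for \<pi>
  proof -
    have "supp (F (Pperm \<pi> x)) = supp (Pperm \<pi> x)"
      using supp_F Pperm_sphere_linf that x by blast
    then have "supp (Pperm (inv \<pi>) (F (Pperm \<pi> x))) = supp (Pperm (inv \<pi>) (Pperm \<pi> x))"
      by (simp add: supp_Pperm)
    then show ?thesis
      using that by (simp add: Pperm_inv_Pperm)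
  qed
  have "supp (\<Sum>\<pi> | \<pi> permutes UNIV. Pperm (inv \<pi>) (F (Pperm \<pi> x))) = supp x"
    using supp_sum_nonneg[OF finite_permutations_UNIV, of "\<lambda>\<pi>. Pperm (inv \<pi>) (F (Pperm \<pi> x))"]
      summand_nonneg supp_summand permutations_UNIV_nonempty
    by auto
  then show ?thesis
    by (simp add: symmetrize_eq_mean supp_scaleR card_permutations_UNIV)
qed

lemma modulus_symmetrize_le:
  fixes F :: "real^'k \<Rightarrow> real^'k"
  shows "modulus (symmetrize F) t \<le> modulus F t"
  unfolding modulus_def[of "symmetrize F"]
proof (rule Sup_least, clarify)
  fix x y :: "real^'k"
  assume x: "x \<in> sphere_linf" and y: "y \<in> sphere_linf" and dist: "linf_norm (x - y) \<le> t"
  obtain \<pi> where \<pi>: "\<pi> permutes UNIV" and mean_le: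
    "l1_norm (symmetrize F x - symmetrize F y) \<le> l1_norm (Pperm (inv \<pi>) (F (Pperm \<pi> x) - F (Pperm \<pi> y)))"
    using l1_norm_mean_le_summand[OF finite_permutations_UNIV permutations_UNIV_nonempty,
        where f = "\<lambda>\<pi>. Pperm (inv \<pi>) (F (Pperm \<pi> x) - F (Pperm \<pi> y))"]
    by (auto simp: symmetrize_diff)
  have "ereal (l1_norm (symmetrize F x - symmetrize F y))
      \<le> ereal (l1_norm (F (Pperm \<pi> x) - F (Pperm \<pi> y)))"
    using mean_le \<pi> by (simp add: l1_norm_Pperm permutes_inv)
  also have "\<dots> \<le> modulus F t"
    using \<pi> x y dist
    by (intro modulus_upper Pperm_sphere_linf) (simp_all add: linf_norm_Pperm flip: Pperm_diff)
  finally show "ereal (l1_norm (symmetrize F x - symmetrize F y)) \<le> modulus F t" .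
qed

theorem lemma4p3:
  fixes F :: "real^'k \<Rightarrow> real^'k"
  assumes F_maps: "\<forall>x\<in>sphere_linf. F x \<in> pos_sphere_l1"
  shows "(\<forall>x\<in>sphere_linf. symmetrize F x \<in> pos_sphere_l1)
     \<and> (\<forall>x\<in>sphere_linf. \<forall>\<pi>. \<pi> permutes (UNIV::'k set) \<longrightarrow>
            symmetrize F (Pperm \<pi> x) = Pperm \<pi> (symmetrize F x))
     \<and> (\<forall>t. modulus (symmetrize F) t \<le> modulus F t)
     \<and> ((\<forall>x\<in>sphere_linf. supp (F x) = supp x) \<longrightarrow>
          (\<forall>x\<in>sphere_linf. supp (symmetrize F x) = supp x))"
  using F_maps
  by (simp add: symmetrize_in_pos_sphere_l1 symmetrize_Pperm modulus_symmetrize_le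
      supp_symmetrize)

end
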